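(* In the setting of the anyon theory $\mathcal{T}$ generated by $c_i,\varphi_i$ ($i=1,\dots,M$) with data $N_i,t_i,p_{ij},n_i$ as below, define $\bar\varphi_i=\varphi_i^{-1}c_i^{2n_i/N_i}$ (so $\varphi_i\bar\varphi_i=c_i^{2n_i/N_i}$), $$a_i=\varphi_i\prod_{j=1}^{i}c_j^{p_{ji}N_j/N_{ij}},\qquad \bar a_i=\bar\varphi_i\prod_{j=i}^{M}c_j^{p_{ij}N_j/N_{ij}}.$$ Then $B_\theta(a_i,\bar a_j)=1$ for all $i,j$, and conversely every anyon type $b$ of $\mathcal{T}$ with $B_\theta(b,\bar a_j)=1$ for all $j$ lies in the subgroup generated by $\{a_i\}_{i=1}^M$. That is, the anyon types braiding trivially with all of $\bar{\mathcal{A}}=\langle\bar a_1,\dots,\bar a_M\rangle$ form exactly the subtheory $\mathcal{A}=\langle a_1,\dots,a_M\rangle$.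
   Context: Data: $N_i$ prime powers; $t_i\in\frac12\mathbb{Z}$ if $N_i$ even, $t_i\in\mathbb{Z}$ if $N_i$ odd; integers $p_{ij}=p_{ji}$ for $i\ne j$; $p_{ii}=\lfloor t_i\rfloor$; $N_{ij}=\gcd(N_i,N_j)$; $n_i=0$ if $t_i\in\mathbb{Z}$ and $n_i=N_i/2$ if $t_i\in\frac12+\mathbb{Z}$. $\mathcal{T}$ is the Abelian anyon theory with fusion group freely generated by $c_i,\varphi_i$ subject to $c_i^{N_i}=\varphi_i^{N_i}=1$, with $\theta(xy)=\theta(x)\theta(y)B_\theta(x,y)$, $B_\theta$ symmetric bimultiplicative, and $\theta(c_i)=1$, $\theta(\varphi_i)=e^{2\pi i n_i/N_i^2}$, $B_\theta(c_i,c_j)=1$, $B_\theta(\varphi_i,c_j)=e^{2\pi i\delta_{ij}/N_i}$, $B_\theta(\varphi_i,\varphi_j)=1$ for $i\ne j$. The braiding phase is $B_\theta(a,b)=\theta(ab)/(\theta(a)\theta(b))$. *)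

theory Defs
  imports "HOL-Analysis.Analysis" "HOL-Library.Product_Plus" "HOL-Library.Function_Algebras" "HOL-Number_Theory.Number_Theory"
begin

text \<open>Anyon types of T are encoded by exponent vectors: a pair (x, y) of integer
  functions stands for the product over i in 1..M of c_i^(x i) phi_i^(y i).
  Fusion is addition of exponent vectors (the pair/function additive group);
  two vectors denote the same anyon iff their entries agree mod N i for i in 1..M.\<close>

type_synonym anyon = "(nat \<Rightarrow> int) \<times> (nat \<Rightarrow> int)"

definition cpow :: "nat \<Rightarrow> int \<Rightarrow> anyon" where
  "cpow i k = ((\<lambda>j. if j = i then k else 0), (\<lambda>j. 0))"

definition phipow :: "nat \<Rightarrow> int \<Rightarrow> anyon" where
  "phipow i k = ((\<lambda>j. 0), (\<lambda>j. if j = i then k else 0))"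

definition zsmul :: "int \<Rightarrow> anyon \<Rightarrow> anyon" where
  "zsmul k a = ((\<lambda>j. k * fst a j), (\<lambda>j. k * snd a j))"

definition anyon_eq :: "nat \<Rightarrow> (nat \<Rightarrow> nat) \<Rightarrow> anyon \<Rightarrow> anyon \<Rightarrow> bool" where
  "anyon_eq M N a b \<longleftrightarrow> (\<forall>i\<in>{1..M}. [fst a i = fst b i] (mod int (N i)) \<and> [snd a i = snd b i] (mod int (N i)))"

definition nn :: "(nat \<Rightarrow> nat) \<Rightarrow> (nat \<Rightarrow> real) \<Rightarrow> nat \<Rightarrow> nat" where
  "nn N t i = (if t i \<in> \<int> then 0 else N i div 2)"

text \<open>Topological spin: the unique quadratic refinement with theta(c_i)=1,
  theta(phi_i)=exp(2 pi i n_i/N_i^2), B(c_i,c_j)=1, B(phi_i,c_j)=exp(2 pi i delta_ij/N_i),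
  B(phi_i,phi_j)=1 for i\<noteq>j:
  theta(prod c_i^x_i phi_i^y_i) = exp(2 pi i sum_i (n_i y_i^2/N_i^2 + x_i y_i/N_i)).\<close>
definition theta :: "nat \<Rightarrow> (nat \<Rightarrow> nat) \<Rightarrow> (nat \<Rightarrow> real) \<Rightarrow> anyon \<Rightarrow> complex" where
  "theta M N t a = exp (2 * complex_of_real pi * \<i> * complex_of_real
      (\<Sum>i\<in>{1..M}. real (nn N t i) * real_of_int ((snd a i)^2) / (real (N i))^2
                    + real_of_int (fst a i * snd a i) / real (N i)))"

definition braid :: "nat \<Rightarrow> (nat \<Rightarrow> nat) \<Rightarrow> (nat \<Rightarrow> real) \<Rightarrow> anyon \<Rightarrow> anyon \<Rightarrow> complex" where
  "braid M N t a b = theta M N t (a + b) / (theta M N t a * theta M N t b)"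

definition phibar :: "(nat \<Rightarrow> nat) \<Rightarrow> (nat \<Rightarrow> real) \<Rightarrow> nat \<Rightarrow> anyon" where
  "phibar N t i = phipow i (-1) + cpow i (int (2 * nn N t i div N i))"

definition avec :: "(nat \<Rightarrow> nat) \<Rightarrow> (nat \<Rightarrow> nat \<Rightarrow> int) \<Rightarrow> nat \<Rightarrow> anyon" where
  "avec N p i = phipow i 1 + (\<Sum>j\<in>{1..i}. cpow j (p j i * int (N j div gcd (N i) (N j))))"

definition abar :: "nat \<Rightarrow> (nat \<Rightarrow> nat) \<Rightarrow> (nat \<Rightarrow> real) \<Rightarrow> (nat \<Rightarrow> nat \<Rightarrow> int) \<Rightarrow> nat \<Rightarrow> anyon" where
  "abar M N t p i = phibar N t i + (\<Sum>j\<in>{i..M}. cpow j (p i j * int (N j div gcd (N i) (N j))))"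

end

theory Submission
  imports Defs
begin

text \<open>The braiding of any anyon b with \<open>abar\<^sub>j\<close> is \<open>exp (2\<pi>i I\<^sub>j(b) / N\<^sub>j)\<close> for an integer
  linear functional \<open>I\<^sub>j\<close>: the factor \<open>c\<^sub>j\<^sup>2\<^sup>n\<^sup>j\<^sup>/\<^sup>N\<^sup>j\<close> of \<open>phibar\<^sub>j\<close> cancels the self-braiding
  \<open>2n\<^sub>j/N\<^sub>j\<^sup>2\<close> of \<open>phi\<^sub>j\<close>, and the factor \<open>c\<^sub>k\<^sup>p\<^sup>j\<^sup>k\<^sup>N\<^sup>k\<^sup>/\<^sup>N\<^sup>j\<^sup>k\<close> braids with \<open>phi\<^sub>k\<close> by the same
  phase as \<open>c\<^sub>j\<^sup>p\<^sup>j\<^sup>k\<^sup>N\<^sup>j\<^sup>/\<^sup>N\<^sup>j\<^sup>k\<close> does with \<open>phi\<^sub>j\<close>. Thus \<open>I\<^sub>j\<close> only sees the \<open>c\<^sub>j\<close>-exponent of b and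
  its \<open>phi\<^sub>k\<close>-exponents for \<open>k \<ge> j\<close>, and \<open>I\<^sub>j(a\<^sub>i) = 0\<close> by the choice of the c-factors of \<open>a\<^sub>i\<close>.
  Conversely, if \<open>N\<^sub>j\<close> divides every \<open>I\<^sub>j(b)\<close>, then b agrees modulo the \<open>N\<^sub>j\<close> with
  \<open>\<Prod>\<^sub>i a\<^sub>i\<^sup>y\<^sup>i\<close>, where \<open>y\<^sub>i\<close> are the \<open>phi\<^sub>i\<close>-exponents of b.\<close>

lemma sum_fun_apply: "(sum f A) k = (\<Sum>a\<in>A. f a k)"
  by (induction A rule: infinite_finite_induct) auto

lemma fst_sum_cpow: "finite A \<Longrightarrow> fst (\<Sum>j\<in>A. cpow j (f j)) k = (if k \<in> A then f k else 0)"
  by (simp add: fst_sum sum_fun_apply cpow_def)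

lemma snd_sum_cpow: "snd (\<Sum>j\<in>A. cpow j (f j)) k = 0"
  by (simp add: snd_sum sum_fun_apply cpow_def)

lemma fst_avec:
  "fst (avec N p i) k = (if k \<in> {1..i} then p k i * int (N k div gcd (N i) (N k)) else 0)"
  unfolding avec_def by (simp add: fst_sum_cpow) (simp add: phipow_def)

lemma snd_avec: "snd (avec N p i) k = (if k = i then 1 else 0)"
  unfolding avec_def by (simp add: snd_sum_cpow) (simp add: phipow_def)

lemma fst_abar:
  "fst (abar M N t p j) k = (if k = j then int (2 * nn N t j div N j) else 0)
     + (if k \<in> {j..M} then p j k * int (N k div gcd (N j) (N k)) else 0)"
  unfolding abar_def phibar_def by (simp add: fst_sum_cpow) (simp add: phipow_def cpow_def)

lemma snd_abar: "snd (abar M N t p j) k = (if k = j then -1 else 0)"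
  unfolding abar_def phibar_def by (simp add: snd_sum_cpow) (simp add: phipow_def cpow_def)

lemma sum_atLeastAtMost_restrict:
  fixes f :: "nat \<Rightarrow> 'a::comm_monoid_add"
  assumes "1 \<le> j"
  shows "(\<Sum>k\<in>{1..M}. if k \<in> {j..M} then f k else 0) = sum f {j..M}"
proof -
  have "{1..M} \<inter> {j..M} = {j..M}" using assms by auto
  then show ?thesis by (metis finite_atLeastAtMost sum.inter_restrict)
qed

definition spin_exponent :: "nat \<Rightarrow> (nat \<Rightarrow> nat) \<Rightarrow> (nat \<Rightarrow> real) \<Rightarrow> anyon \<Rightarrow> real" where
  "spin_exponent M N t a = (\<Sum>i\<in>{1..M}. real (nn N t i) * real_of_int ((snd a i)^2) / (real (N i))^2
                    + real_of_int (fst a i * snd a i) / real (N i))"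

definition braid_exponent :: "nat \<Rightarrow> (nat \<Rightarrow> nat) \<Rightarrow> (nat \<Rightarrow> real) \<Rightarrow> anyon \<Rightarrow> anyon \<Rightarrow> real" where
  "braid_exponent M N t a b = (\<Sum>i\<in>{1..M}.
      2 * real (nn N t i) * real_of_int (snd a i * snd b i) / (real (N i))^2
      + real_of_int (fst a i * snd b i + fst b i * snd a i) / real (N i))"

lemma spin_exponent_add:
  "spin_exponent M N t (a + b) = spin_exponent M N t a + spin_exponent M N t b + braid_exponent M N t a b"
  unfolding spin_exponent_def braid_exponent_def
  by (simp add: sum.distrib[symmetric] power2_sum algebra_simps add_divide_distrib diff_divide_distrib)

lemma braid_eq_exp_braid_exponent:
  "braid M N t a b = exp (2 * complex_of_real pi * \<i> * complex_of_real (braid_exponent M N t a b))"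
proof -
  let ?c = "2 * complex_of_real pi * \<i>"
  have theta: "theta M N t x = exp (?c * complex_of_real (spin_exponent M N t x))" for x
    unfolding theta_def spin_exponent_def by simp
  have "theta M N t (a + b) = theta M N t a * theta M N t b * exp (?c * complex_of_real (braid_exponent M N t a b))"
    unfolding theta spin_exponent_add by (simp add: exp_add[symmetric] algebra_simps)
  then show ?thesis unfolding braid_def by (simp add: theta)
qed

lemma exp_two_pi_i_eq_1_iff:
  "exp (2 * complex_of_real pi * \<i> * complex_of_real r) = 1 \<longleftrightarrow> r \<in> \<int>"
proof
  assume "exp (2 * complex_of_real pi * \<i> * complex_of_real r) = 1"
  then obtain n :: int where "2 * pi * r = of_int (2 * n) * pi"
    unfolding exp_eq_1 by auto
  then have "r = of_int n" by simp
  then show "r \<in> \<int>" by simp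
next
  assume "r \<in> \<int>"
  then obtain n :: int where "r = of_int n" by (elim Ints_cases)
  then show "exp (2 * complex_of_real pi * \<i> * complex_of_real r) = 1"
    using exp_2pi_1_int[of n] by (simp add: mult.commute mult.left_commute)
qed

lemma nn_div_N:
  assumes "odd (N j) \<longrightarrow> t j \<in> \<int>" and "N j > 0"
  shows "2 * real (nn N t j) = real (2 * nn N t j div N j) * real (N j)"
proof (cases "t j \<in> \<int>")
  case True then show ?thesis by (simp add: nn_def)
next
  case False
  then have "2 * (N j div 2) = N j" using assms by auto
  then have "2 * real (N j div 2) = real (N j)" by (metis of_nat_mult of_nat_numeral)
  moreover have "2 * nn N t j div N j = 1" using False \<open>2 * (N j div 2) = N j\<close> assms by (simp add: nn_def)
  ultimately show ?thesis using False by (simp add: nn_def)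
qed

lemma div_gcd_over_self:
  fixes a b :: nat assumes "a > 0" "b > 0"
  shows "real (a div gcd a b) / real a = real (b div gcd a b) / real b"
  using assms by (simp add: real_of_nat_div)

definition abar_pairing :: "nat \<Rightarrow> (nat \<Rightarrow> nat) \<Rightarrow> (nat \<Rightarrow> nat \<Rightarrow> int) \<Rightarrow> nat \<Rightarrow> anyon \<Rightarrow> int" where
  "abar_pairing M N p j b = (\<Sum>k\<in>{j..M}. p j k * snd b k * int (N j div gcd (N j) (N k))) - fst b j"

lemma braid_exponent_abar:
  assumes j: "j \<in> {1..M}" and N_pos: "\<forall>i\<in>{1..M}. N i > 0" and "odd (N j) \<longrightarrow> t j \<in> \<int>"
  shows "braid_exponent M N t b (abar M N t p j) = real_of_int (abar_pairing M N p j b) / real (N j)"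
proof -
  let ?q = "\<lambda>k. real_of_int (p j k * snd b k * int (N j div gcd (N j) (N k))) / real (N j)"
  have Nj: "N j > 0" using j N_pos by auto
  have j_ge_1: "1 \<le> j" using j by simp
  have summand: "2 * real (nn N t k) * real_of_int (snd b k * snd (abar M N t p j) k) / (real (N k))^2
      + real_of_int (fst b k * snd (abar M N t p j) k + fst (abar M N t p j) k * snd b k) / real (N k)
      = (if k = j then - real_of_int (fst b j) / real (N j) else 0) + (if k \<in> {j..M} then ?q k else 0)"
    if k: "k \<in> {1..M}" for k
  proof (cases "k = j")
    case True
    then show ?thesis
      using nn_div_N[of N j t, OF assms(3) Nj] Nj by (simp add: fst_abar snd_abar power2_eq_square field_simps)
  next
    case False
    have "N k > 0" using k N_pos by auto
    then have ratio: "real (N k div gcd (N j) (N k)) / real (N k) = real (N j div gcd (N j) (N k)) / real (N j)"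
      using div_gcd_over_self[OF Nj] by simp
    have "real_of_int (p j k * int (N k div gcd (N j) (N k)) * snd b k) / real (N k)
        = real_of_int (p j k * snd b k) * (real (N k div gcd (N j) (N k)) / real (N k))"
      by simp
    also have "\<dots> = ?q k"
      unfolding ratio by simp
    finally show ?thesis using False by (simp add: fst_abar snd_abar)
  qed
  have "braid_exponent M N t b (abar M N t p j)
      = (\<Sum>k\<in>{1..M}. (if k = j then - real_of_int (fst b j) / real (N j) else 0) + (if k \<in> {j..M} then ?q k else 0))"
    unfolding braid_exponent_def using summand by (rule sum.cong[OF refl])
  also have "\<dots> = - real_of_int (fst b j) / real (N j) + sum ?q {j..M}"
    using j by (simp only: sum.distrib sum_atLeastAtMost_restrict[of j, OF j_ge_1]) simp
  also have "\<dots> = real_of_int (abar_pairing M N p j b) / real (N j)"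
    unfolding abar_pairing_def by (simp add: sum_divide_distrib[symmetric] diff_divide_distrib)
  finally show ?thesis .
qed

lemma braid_abar_eq_1_iff:
  assumes "j \<in> {1..M}" and "\<forall>i\<in>{1..M}. N i > 0" and "odd (N j) \<longrightarrow> t j \<in> \<int>"
  shows "braid M N t b (abar M N t p j) = 1 \<longleftrightarrow> int (N j) dvd abar_pairing M N p j b"
proof -
  have "braid M N t b (abar M N t p j) = 1
      \<longleftrightarrow> real_of_int (abar_pairing M N p j b) / real_of_int (int (N j)) \<in> \<int>"
    by (simp only: braid_eq_exp_braid_exponent braid_exponent_abar[of j M N t, OF assms]
        exp_two_pi_i_eq_1_iff of_int_of_nat_eq)
  also have "\<dots> \<longleftrightarrow> int (N j) = 0 \<or> int (N j) dvd abar_pairing M N p j b"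
    by (rule of_int_div_of_int_in_Ints_iff)
  also have "\<dots> \<longleftrightarrow> int (N j) dvd abar_pairing M N p j b"
    using assms(1,2) by fastforce
  finally show ?thesis .
qed

lemma fst_sum_avec:
  assumes "j \<in> {1..M}"
  shows "fst (\<Sum>i\<in>{1..M}. zsmul (y i) (avec N p i)) j
       = (\<Sum>i\<in>{j..M}. p j i * y i * int (N j div gcd (N j) (N i)))"
proof -
  have "fst (\<Sum>i\<in>{1..M}. zsmul (y i) (avec N p i)) j = (\<Sum>i\<in>{1..M}. y i * fst (avec N p i) j)"
    by (simp add: fst_sum sum_fun_apply zsmul_def)
  also have "\<dots> = (\<Sum>i\<in>{1..M}. if i \<in> {j..M} then p j i * y i * int (N j div gcd (N j) (N i)) else 0)"
    using assms by (intro sum.cong) (auto simp: fst_avec gcd.commute)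
  also have "\<dots> = (\<Sum>i\<in>{j..M}. p j i * y i * int (N j div gcd (N j) (N i)))"
    using assms by (intro sum_atLeastAtMost_restrict) simp
  finally show ?thesis .
qed

lemma snd_sum_avec:
  assumes "j \<in> {1..M}"
  shows "snd (\<Sum>i\<in>{1..M}. zsmul (y i) (avec N p i)) j = y j"
proof -
  have "snd (\<Sum>i\<in>{1..M}. zsmul (y i) (avec N p i)) j = (\<Sum>i\<in>{1..M}. if i = j then y j else 0)"
    by (simp add: snd_sum sum_fun_apply zsmul_def snd_avec if_distrib cong: if_cong)
  then show ?thesis using assms by simp
qed

lemma abar_pairing_avec:
  assumes "i \<in> {1..M}" "j \<in> {1..M}"
  shows "abar_pairing M N p j (avec N p i) = 0"
proof -
  have "(\<Sum>k\<in>{j..M}. p j k * snd (avec N p i) k * int (N j div gcd (N j) (N k)))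
      = (\<Sum>k\<in>{j..M}. if k = i then p j i * int (N j div gcd (N j) (N i)) else 0)"
    by (rule sum.cong) (auto simp: snd_avec)
  also have "\<dots> = (if i \<in> {j..M} then p j i * int (N j div gcd (N j) (N i)) else 0)"
    by simp
  finally show ?thesis using assms unfolding abar_pairing_def by (auto simp: fst_avec gcd.commute)
qed

lemma anyon_eq_sum_avec:
  assumes "\<forall>j\<in>{1..M}. int (N j) dvd abar_pairing M N p j b"
  shows "anyon_eq M N b (\<Sum>i\<in>{1..M}. zsmul (snd b i) (avec N p i))"
  unfolding anyon_eq_def
proof
  fix j assume j: "j \<in> {1..M}"
  have "fst (\<Sum>i\<in>{1..M}. zsmul (snd b i) (avec N p i)) j - fst b j = abar_pairing M N p j b"
    unfolding abar_pairing_def fst_sum_avec[OF j] ..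
  then have "[fst (\<Sum>i\<in>{1..M}. zsmul (snd b i) (avec N p i)) j = fst b j] (mod int (N j))"
    using assms j by (simp add: cong_iff_dvd_diff)
  then show "[fst b j = fst (\<Sum>i\<in>{1..M}. zsmul (snd b i) (avec N p i)) j] (mod int (N j))
      \<and> [snd b j = snd (\<Sum>i\<in>{1..M}. zsmul (snd b i) (avec N p i)) j] (mod int (N j))"
    unfolding snd_sum_avec[OF j] by (simp add: cong_sym_eq)
qed

theorem mainTheorem10:
  fixes M :: nat and N :: "nat \<Rightarrow> nat" and t :: "nat \<Rightarrow> real" and p :: "nat \<Rightarrow> nat \<Rightarrow> int"
  assumes N_pp: "\<forall>i\<in>{1..M}. primepow (N i)"
    and t_half: "\<forall>i\<in>{1..M}. even (N i) \<longrightarrow> 2 * t i \<in> \<int>"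
    and t_int: "\<forall>i\<in>{1..M}. odd (N i) \<longrightarrow> t i \<in> \<int>"
    and p_sym: "\<forall>i\<in>{1..M}. \<forall>j\<in>{1..M}. i \<noteq> j \<longrightarrow> p i j = p j i"
    and p_diag: "\<forall>i\<in>{1..M}. p i i = \<lfloor>t i\<rfloor>"
  shows "(\<forall>i\<in>{1..M}. \<forall>j\<in>{1..M}. braid M N t (avec N p i) (abar M N t p j) = 1)
       \<and> (\<forall>b :: anyon. (\<forall>j\<in>{1..M}. braid M N t b (abar M N t p j) = 1) \<longrightarrow>
            (\<exists>k :: nat \<Rightarrow> int. anyon_eq M N b (\<Sum>i\<in>{1..M}. zsmul (k i) (avec N p i))))"
proof -
  have N_pos: "\<forall>i\<in>{1..M}. N i > 0"
    using N_pp primepow_gt_Suc_0 by fastforce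
  have braid_1_iff: "braid M N t b (abar M N t p j) = 1 \<longleftrightarrow> int (N j) dvd abar_pairing M N p j b"
    if "j \<in> {1..M}" for j b
    using braid_abar_eq_1_iff[OF that N_pos] t_int that by blast
  show ?thesis
  proof (intro conjI ballI allI impI)
    show "braid M N t (avec N p i) (abar M N t p j) = 1" if "i \<in> {1..M}" "j \<in> {1..M}" for i j
      using that by (simp add: braid_1_iff abar_pairing_avec)
    show "\<exists>k. anyon_eq M N b (\<Sum>i\<in>{1..M}. zsmul (k i) (avec N p i))"
      if "\<forall>j\<in>{1..M}. braid M N t b (abar M N t p j) = 1" for b
      using that braid_1_iff anyon_eq_sum_avec by blast
  qed
qed

end
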